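(* Let $r,k,s_1,\dots,s_k$ be nonnegative integers and $\Gamma$ the complete bipartite supernova quiver with these parameters. Let $\mathbf{v}\in\mathbb{Z}_{\ge0}^I$. If $\mathbf{v}\in\Phi(\Gamma)$ and $v_{(i;0)}>0$ for some $i\in\{1,\dots,k\}$, then $v_{(i;0)}\ge v_{(i;1)}\ge v_{(i;2)}\ge\cdots\ge v_{(i;s_i)}$.
   Context: $\Gamma$ has vertex set $I$ consisting of $(l)$, $l=1,\dots,r$, and $(i;j)$, $i=1,\dots,k$, $j=0,\dots,s_i$; arrows: one arrow $(l)\to(i;0)$ for every $l,i$, and one arrow $(i;j)\to(i;j-1)$ for $1\le j\le s_i$. $\Phi(\Gamma)\subset\mathbb{Z}^I$ is the root system of $\Gamma$: with the bilinear form $(\mathbf{e}_a,\mathbf{e}_a)=2$, $(\mathbf{e}_a,\mathbf{e}_b)=-$(number of edges joining $a,b$) for $a\ne b$, and the Weyl group $W$ generated by $s_a(\lambda)=\lambda-(\lambda,\mathbf{e}_a)\mathbf{e}_a$, the real roots are the $w(\mathbf{e}_a)$, and the imaginary roots are $\pm w(\delta)$ with $w\in W$ and $\delta$ a nonzero vector in $\mathbb{Z}_{\ge0}^I$ with connected support and $(\mathbf{e}_a,\delta)\le0$ for all $a$. *)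

theory Defs
  imports Main
begin

text \<open>Vertices of the complete bipartite supernova quiver: L l is the vertex (l),
  C i j is the vertex (i;j).\<close>
datatype vtx = L nat | C nat nat

definition verts :: "nat \<Rightarrow> nat \<Rightarrow> (nat \<Rightarrow> nat) \<Rightarrow> vtx set" where
  "verts r k s = {L l | l. 1 \<le> l \<and> l \<le> r} \<union> {C i j | i j. 1 \<le> i \<and> i \<le> k \<and> j \<le> s i}"

definition arrow :: "nat \<Rightarrow> nat \<Rightarrow> (nat \<Rightarrow> nat) \<Rightarrow> vtx \<Rightarrow> vtx \<Rightarrow> bool" where
  "arrow r k s a b \<longleftrightarrow>
     (\<exists>l i. a = L l \<and> b = C i 0 \<and> 1 \<le> l \<and> l \<le> r \<and> 1 \<le> i \<and> i \<le> k) \<or>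
     (\<exists>i j. a = C i j \<and> b = C i (j - 1) \<and> 1 \<le> i \<and> i \<le> k \<and> 1 \<le> j \<and> j \<le> s i)"

definition nedges :: "nat \<Rightarrow> nat \<Rightarrow> (nat \<Rightarrow> nat) \<Rightarrow> vtx \<Rightarrow> vtx \<Rightarrow> nat" where
  "nedges r k s a b = (if a = b then 0 else
     (if arrow r k s a b then 1 else 0) + (if arrow r k s b a then 1 else 0))"

definition cform :: "nat \<Rightarrow> nat \<Rightarrow> (nat \<Rightarrow> nat) \<Rightarrow> vtx \<Rightarrow> vtx \<Rightarrow> int" where
  "cform r k s a b = (if a = b then 2 else - int (nedges r k s a b))"

text \<open>Vectors in Z^I are functions vtx \<Rightarrow> int (relevant only on verts).\<close>
definition bform :: "nat \<Rightarrow> nat \<Rightarrow> (nat \<Rightarrow> nat) \<Rightarrow> (vtx \<Rightarrow> int) \<Rightarrow> (vtx \<Rightarrow> int) \<Rightarrow> int" where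
  "bform r k s x y = (\<Sum>a\<in>verts r k s. \<Sum>b\<in>verts r k s. x a * y b * cform r k s a b)"

definition evec :: "vtx \<Rightarrow> vtx \<Rightarrow> int" where
  "evec a = (\<lambda>b. if b = a then 1 else 0)"

definition srefl :: "nat \<Rightarrow> nat \<Rightarrow> (nat \<Rightarrow> nat) \<Rightarrow> vtx \<Rightarrow> (vtx \<Rightarrow> int) \<Rightarrow> (vtx \<Rightarrow> int)" where
  "srefl r k s a x = (\<lambda>b. x b - bform r k s x (evec a) * evec a b)"

text \<open>W-orbit of x: the set of w(x), w in the Weyl group generated by the
  simple reflections (which are involutions, so the generated monoid is the group).\<close>
inductive_set weyl_orbit :: "nat \<Rightarrow> nat \<Rightarrow> (nat \<Rightarrow> nat) \<Rightarrow> (vtx \<Rightarrow> int) \<Rightarrow> (vtx \<Rightarrow> int) set"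
  for r k s x where
  base: "x \<in> weyl_orbit r k s x"
| step: "y \<in> weyl_orbit r k s x \<Longrightarrow> a \<in> verts r k s \<Longrightarrow> srefl r k s a y \<in> weyl_orbit r k s x"

definition real_roots :: "nat \<Rightarrow> nat \<Rightarrow> (nat \<Rightarrow> nat) \<Rightarrow> (vtx \<Rightarrow> int) set" where
  "real_roots r k s = (\<Union>a\<in>verts r k s. weyl_orbit r k s (evec a))"

definition connected_support :: "nat \<Rightarrow> nat \<Rightarrow> (nat \<Rightarrow> nat) \<Rightarrow> (vtx \<Rightarrow> int) \<Rightarrow> bool" where
  "connected_support r k s d \<longleftrightarrow>
     (\<forall>a b. d a \<noteq> 0 \<longrightarrow> d b \<noteq> 0 \<longrightarrow>
        (\<lambda>x y. d x \<noteq> 0 \<and> d y \<noteq> 0 \<and> nedges r k s x y > 0)\<^sup>*\<^sup>* a b)"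

definition fundamental_imag :: "nat \<Rightarrow> nat \<Rightarrow> (nat \<Rightarrow> nat) \<Rightarrow> (vtx \<Rightarrow> int) \<Rightarrow> bool" where
  "fundamental_imag r k s d \<longleftrightarrow>
     (\<forall>a. 0 \<le> d a) \<and> (\<forall>a. a \<notin> verts r k s \<longrightarrow> d a = 0) \<and> (\<exists>a. d a \<noteq> 0) \<and>
     connected_support r k s d \<and>
     (\<forall>a\<in>verts r k s. bform r k s (evec a) d \<le> 0)"

definition imag_roots :: "nat \<Rightarrow> nat \<Rightarrow> (nat \<Rightarrow> nat) \<Rightarrow> (vtx \<Rightarrow> int) set" where
  "imag_roots r k s = {y. \<exists>d. fundamental_imag r k s d \<and>
      (y \<in> weyl_orbit r k s d \<or> (\<lambda>b. - y b) \<in> weyl_orbit r k s d)}"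

definition roots :: "nat \<Rightarrow> nat \<Rightarrow> (nat \<Rightarrow> nat) \<Rightarrow> (vtx \<Rightarrow> int) set" where
  "roots r k s = real_roots r k s \<union> imag_roots r k s"

end

(*
  Every root of the supernova quiver is sign-coherent.  For a real root w(e_a) this is the
  classical fact that w(e_a) is nonnegative when l(w s_a) >= l(w) and nonpositive otherwise,
  proved by induction on l(w): factor w = v u with u in the parabolic subgroup generated by s_a
  and s_b (s_b a descent of w) and v of minimal length, so that v has neither s_a nor s_b as a
  descent, and check the three possible reduced words u.  For an imaginary root +-w(d), the
  vector d is nonnegative with (d, e_c) <= 0 for all c, and l(w s_c) > l(w) gives
  w s_c(d) = w(d) - (d, e_c) w(e_c) >= w(d), so w(d) >= d >= 0.

  Now suppose v_(i;j-1) < v_(i;j).  Reflecting successively at (i;j), (i;j+1), ..., (i;s_i)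
  pushes this ascent to the tip of the arm, where the last reflection makes the coordinate
  negative, while the coordinate at (i;0) is never changed.  The result is again a root, with
  a positive and a negative coordinate.
*)

theory Submission
  imports Defs
begin

definition sign_coherent :: "('v \<Rightarrow> int) \<Rightarrow> bool" where
  "sign_coherent x \<longleftrightarrow> (\<forall>v. 0 \<le> x v) \<or> (\<forall>v. x v \<le> 0)"

definition unit_vec :: "'v \<Rightarrow> 'v \<Rightarrow> int" where
  "unit_vec a = (\<lambda>b. if b = a then 1 else 0)"

lemma sum_mult_unit_vec: "finite A \<Longrightarrow> a \<in> A \<Longrightarrow> (\<Sum>c\<in>A. f c * unit_vec a c) = f a"
  by (simp add: unit_vec_def if_distrib[of "(*) _"] sum.delta cong: if_cong)

lemma two_letter_word_cases:
  assumes "set u \<subseteq> {a, b}"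
    and "\<And>p c q. u \<noteq> p @ c # c # q" and "\<And>p. u \<noteq> p @ [a]" and "\<And>p. u \<noteq> p @ [b, a, b]"
  shows "u = [] \<or> u = [b] \<or> u = [a, b]"
proof (cases u rule: rev_exhaust)
  case (snoc u1 x)
  then have x: "x = b" using assms(1,3) by auto
  show ?thesis
  proof (cases u1 rule: rev_exhaust)
    case (snoc u2 y)
    then have y: "y = a" using assms(1) assms(2)[of u2 b "[]"] \<open>u = u1 @ [x]\<close> x by auto
    show ?thesis
    proof (cases u2 rule: rev_exhaust)
      case (snoc u3 z)
      have "z = a \<or> z = b" using assms(1) snoc \<open>u1 = u2 @ [y]\<close> \<open>u = u1 @ [x]\<close> by auto
      then show ?thesis
        using assms(2)[of u3 a "[b]"] assms(4)[of u3] snoc \<open>u1 = u2 @ [y]\<close> \<open>u = u1 @ [x]\<close> x y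
        by auto
    qed (use snoc \<open>u = u1 @ [x]\<close> x y in simp)
  qed (use \<open>u = u1 @ [x]\<close> x in simp)
qed simp

locale simply_laced =
  fixes V :: "'v set" and A :: "'v \<Rightarrow> 'v \<Rightarrow> int"
  assumes finite_V: "finite V"
    and A_sym: "A a b = A b a"
    and A_diag: "A a a = 2"
    and A_offdiag: "a \<noteq> b \<Longrightarrow> A a b = 0 \<or> A a b = -1"
begin

definition pairing :: "('v \<Rightarrow> int) \<Rightarrow> 'v \<Rightarrow> int" where
  "pairing x a = (\<Sum>c\<in>V. x c * A c a)"

definition reflect :: "'v \<Rightarrow> ('v \<Rightarrow> int) \<Rightarrow> ('v \<Rightarrow> int)" where
  "reflect a x = (\<lambda>b. x b - pairing x a * unit_vec a b)"

definition act :: "'v list \<Rightarrow> ('v \<Rightarrow> int) \<Rightarrow> ('v \<Rightarrow> int)" where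
  "act w = foldr reflect w"

definition weyl_length :: "(('v \<Rightarrow> int) \<Rightarrow> ('v \<Rightarrow> int)) \<Rightarrow> nat" where
  "weyl_length f = (LEAST n. \<exists>w. set w \<subseteq> V \<and> length w = n \<and> act w = f)"

definition reduced :: "'v list \<Rightarrow> bool" where
  "reduced w \<longleftrightarrow> set w \<subseteq> V \<and> weyl_length (act w) = length w"

lemma pairing_unit_vec: "b \<in> V \<Longrightarrow> pairing (unit_vec b) a = A b a"
  using sum_mult_unit_vec[OF finite_V, of b "\<lambda>c. A c a"] by (simp add: pairing_def mult.commute)

lemma pairing_add: "pairing (\<lambda>v. x v + y v) a = pairing x a + pairing y a"
  by (simp add: pairing_def sum.distrib algebra_simps)

lemma pairing_scale: "pairing (\<lambda>v. c * x v) a = c * pairing x a"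
  by (simp add: pairing_def sum_distrib_left algebra_simps)

lemma reflect_apply: "reflect a x v = x v - pairing x a * unit_vec a v"
  by (simp add: reflect_def)

lemma reflect_unit_vec: "b \<in> V \<Longrightarrow> reflect a (unit_vec b) = (\<lambda>v. unit_vec b v - A b a * unit_vec a v)"
  by (simp add: reflect_def pairing_unit_vec)

lemma reflect_unit_vec_self: "a \<in> V \<Longrightarrow> reflect a (unit_vec a) = (\<lambda>v. - unit_vec a v)"
  by (simp add: reflect_unit_vec A_diag)

lemma pairing_reflect: "a \<in> V \<Longrightarrow> pairing (reflect a x) b = pairing x b - pairing x a * A a b"
  using pairing_add[of x "\<lambda>v. - pairing x a * unit_vec a v" b] pairing_scale[of "- pairing x a" "unit_vec a" b]
  by (simp add: reflect_def pairing_unit_vec)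

lemma reflect_reflect: "a \<in> V \<Longrightarrow> reflect a (reflect a x) = x"
  by (rule ext) (simp add: reflect_apply pairing_reflect A_diag unit_vec_def)

lemma reflect_commute:
  "a \<in> V \<Longrightarrow> b \<in> V \<Longrightarrow> A a b = 0 \<Longrightarrow> reflect a (reflect b x) = reflect b (reflect a x)"
  by (rule ext) (simp add: reflect_apply pairing_reflect A_sym[of b a] algebra_simps)

lemma reflect_braid:
  "a \<in> V \<Longrightarrow> b \<in> V \<Longrightarrow> A a b = -1 \<Longrightarrow>
   reflect a (reflect b (reflect a x)) = reflect b (reflect a (reflect b x))"
  by (rule ext) (simp add: reflect_apply pairing_reflect A_sym[of b a] A_diag unit_vec_def algebra_simps)

lemma reflect_add: "reflect a (\<lambda>v. x v + y v) = (\<lambda>v. reflect a x v + reflect a y v)"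
  by (rule ext) (simp add: reflect_apply pairing_add algebra_simps)

lemma reflect_scale: "reflect a (\<lambda>v. c * x v) = (\<lambda>v. c * reflect a x v)"
  by (rule ext) (simp add: reflect_apply pairing_scale algebra_simps)

lemma act_Nil [simp]: "act [] x = x"
  by (simp add: act_def)

lemma act_Cons [simp]: "act (a # w) x = reflect a (act w x)"
  by (simp add: act_def)

lemma act_append [simp]: "act (u @ w) x = act u (act w x)"
  by (simp add: act_def)

lemma act_append_fun: "act (u @ w) = act u \<circ> act w"
  by (simp add: fun_eq_iff)

lemma act_add: "act w (\<lambda>v. x v + y v) = (\<lambda>v. act w x v + act w y v)"
  by (induction w) (simp_all add: reflect_add)

lemma act_scale: "act w (\<lambda>v. c * x v) = (\<lambda>v. c * act w x v)"
  by (induction w) (simp_all add: reflect_scale)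

lemma act_uminus: "act w (\<lambda>v. - x v) = (\<lambda>v. - act w x v)"
  using act_scale[of w "-1" x] by simp

lemma act_reflect: "act w (reflect a x) v = act w x v - pairing x a * act w (unit_vec a) v"
proof -
  have "reflect a x = (\<lambda>v. x v + (- pairing x a) * unit_vec a v)" by (simp add: reflect_def)
  then have "act w (reflect a x) = (\<lambda>v. act w x v + (- pairing x a) * act w (unit_vec a) v)"
    by (simp only: act_add act_scale)
  then show ?thesis by simp
qed

lemma act_cancel: "c \<in> V \<Longrightarrow> act (p @ c # c # q) = act (p @ q)"
  by (rule ext) (simp add: reflect_reflect)

lemma act_commute: "a \<in> V \<Longrightarrow> b \<in> V \<Longrightarrow> A a b = 0 \<Longrightarrow> act (p @ a # b # q) = act (p @ b # a # q)"
  by (simp add: fun_eq_iff reflect_commute[of a b])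

lemma act_braid: "a \<in> V \<Longrightarrow> b \<in> V \<Longrightarrow> A a b = -1 \<Longrightarrow>
   act (p @ a # b # a # q) = act (p @ b # a # b # q)"
  by (simp add: fun_eq_iff reflect_braid[of a b])

lemma weyl_length_le: "set w \<subseteq> V \<Longrightarrow> weyl_length (act w) \<le> length w"
  unfolding weyl_length_def by (rule Least_le) auto

lemma obtain_reduced:
  assumes "set w \<subseteq> V"
  obtains w' where "reduced w'" "act w' = act w"
proof -
  have "\<exists>w'. set w' \<subseteq> V \<and> length w' = weyl_length (act w) \<and> act w' = act w"
    unfolding weyl_length_def by (rule LeastI_ex) (use assms in auto)
  then show thesis using that unfolding reduced_def by (metis)
qed

lemma reduced_length_le: "reduced w \<Longrightarrow> set w' \<subseteq> V \<Longrightarrow> act w' = act w \<Longrightarrow> length w \<le> length w'"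
  unfolding reduced_def by (metis weyl_length_le)

lemma reduced_append_left: "reduced (v @ u) \<Longrightarrow> reduced v"
proof -
  assume vu: "reduced (v @ u)"
  have "set v \<subseteq> V" "set u \<subseteq> V" using vu by (auto simp: reduced_def)
  then obtain v' where v': "reduced v'" "act v' = act v" using obtain_reduced by blast
  have "act (v' @ u) = act (v @ u)" using v'(2) by (simp add: fun_eq_iff)
  then have "length v \<le> length v'"
    using reduced_length_le[OF vu, of "v' @ u"] v'(1) \<open>set u \<subseteq> V\<close> by (auto simp: reduced_def)
  then show "reduced v"
    using v' weyl_length_le[OF \<open>set v \<subseteq> V\<close>] \<open>set v \<subseteq> V\<close> by (auto simp: reduced_def)
qed

lemma not_reduced_square: "\<not> reduced (p @ c # c # q)"
proof
  assume red: "reduced (p @ c # c # q)"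
  then have "set (p @ q) \<subseteq> V" "c \<in> V" by (auto simp: reduced_def)
  then show False using reduced_length_le[OF red, of "p @ q"] act_cancel by simp
qed

lemma parabolic_factorisation:
  assumes red: "reduced (w1 @ [b])" and a: "a \<in> V"
  obtains v u where "reduced (v @ u)" "act (v @ u) = act (w1 @ [b])" "set u \<subseteq> {a, b}"
    "length v \<le> length w1" "\<And>c. c \<in> {a, b} \<Longrightarrow> weyl_length (act v) \<le> weyl_length (act (v @ [c]))"
proof -
  define P where "P v \<longleftrightarrow> (\<exists>u. reduced (v @ u) \<and> act (v @ u) = act (w1 @ [b]) \<and> set u \<subseteq> {a, b})" for v
  have "P w1" using red unfolding P_def by (intro exI[of _ "[b]"]) simp
  then obtain v where "P v" and v_min: "\<And>v'. P v' \<Longrightarrow> length v \<le> length v'"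
    using ex_has_least_nat[of P w1 length] by blast
  then obtain u where vu: "reduced (v @ u)" "act (v @ u) = act (w1 @ [b])" "set u \<subseteq> {a, b}"
    unfolding P_def by blast
  have ascent: "weyl_length (act v) \<le> weyl_length (act (v @ [c]))" if c: "c \<in> {a, b}" for c
  proof (rule ccontr)
    assume descent: "\<not> ?thesis"
    have v: "reduced v" using reduced_append_left[OF vu(1)] .
    have cV: "c \<in> V" and uV: "set u \<subseteq> V" using c a red vu(3) by (auto simp: reduced_def)
    obtain v' where v': "reduced v'" "act v' = act (v @ [c])"
      using obtain_reduced[of "v @ [c]"] v cV by (auto simp: reduced_def)
    have shorter: "length v' < length v" using v v' descent by (simp add: reduced_def)
    have same: "act (v' @ c # u) = act (v @ u)"
      using v'(2) cV by (simp add: fun_eq_iff reflect_reflect)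
    have "length (v' @ c # u) \<le> weyl_length (act (v' @ c # u))"
      using vu(1) same shorter by (simp add: reduced_def)
    then have "reduced (v' @ c # u)"
      using v' cV uV weyl_length_le[of "v' @ c # u"] by (auto simp: reduced_def)
    then have "P v'" using same vu(2,3) c unfolding P_def by (intro exI[of _ "c # u"]) auto
    then show False using v_min[of v'] shorter by simp
  qed
  show thesis using that[OF vu v_min[OF \<open>P w1\<close>]] ascent by blast
qed

lemma dihedral_bab_a_shortening:
  assumes "a \<in> V" "b \<in> V" "a \<noteq> b"
  obtains t where "set t \<subseteq> V" "length t \<le> 2" "act ([b, a, b] @ [a]) = act t"
proof (cases "A a b = 0")
  case True
  have "act [b, a, b, a] = act [b, b, a, a]" using act_commute[OF assms(1,2) True, of "[b]" "[a]"] by simp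
  also have "\<dots> = act []" using act_cancel[OF assms(2), of "[]" "[a, a]"] act_cancel[OF assms(1), of "[]" "[]"]
    by simp
  finally show thesis using that[of "[]"] by simp
next
  case False
  then have "A b a = -1" using A_offdiag[OF assms(3)] A_sym[of a b] by simp
  then have "act [b, a, b, a] = act [a, b, a, a]" using act_braid[OF assms(2,1), of "[]" "[a]"] by simp
  also have "\<dots> = act [a, b]" using act_cancel[OF assms(1), of "[a, b]" "[]"] by simp
  finally show thesis using that[of "[a, b]"] assms by simp
qed

lemma ascent_dihedral_tail:
  assumes red: "reduced (v @ u)" and ascent: "weyl_length (act (v @ u)) \<le> weyl_length (act (v @ u @ [a]))"
    and u: "set u \<subseteq> {a, b}" and ab: "a \<noteq> b" "a \<in> V" "b \<in> V"
  shows "u = [] \<or> u = [b] \<or> (u = [a, b] \<and> A a b = -1)"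
proof -
  have no_shortening: "length u \<le> length u'" if "set u' \<subseteq> V" "act (u @ [a]) = act u'" for u'
  proof -
    have "act (v @ u @ [a]) = act (v @ u')" by (metis act_append_fun append_assoc that(2))
    then have "weyl_length (act (v @ u @ [a])) \<le> length v + length u'"
      using weyl_length_le[of "v @ u'"] red that(1) by (auto simp: reduced_def)
    then show ?thesis using ascent red by (simp add: reduced_def)
  qed
  have no_square: "u \<noteq> p @ c # c # q" for p c q
    using not_reduced_square[of "v @ p" c q] red by auto
  have no_final_a: "u \<noteq> p @ [a]" for p
  proof
    assume "u = p @ [a]"
    moreover have "act (p @ [a] @ [a]) = act p" using act_cancel[OF ab(2), of p "[]"] by simp
    ultimately show False using no_shortening[of p] u ab by auto
  qed
  have no_final_bab: "u \<noteq> p @ [b, a, b]" for p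
  proof
    assume "u = p @ [b, a, b]"
    moreover obtain t where "set t \<subseteq> V" "length t \<le> 2" "act ([b, a, b] @ [a]) = act t"
      using dihedral_bab_a_shortening[OF ab(2,3,1)] .
    moreover from this(3) have "act (p @ [b, a, b] @ [a]) = act (p @ t)" by (simp add: act_append_fun)
    ultimately show False using no_shortening[of "p @ t"] u ab by auto
  qed
  have "A a b = -1" if "u = [a, b]"
  proof (rule ccontr)
    assume "A a b \<noteq> -1"
    then have "act ([a, b] @ [a]) = act [b]"
      using act_commute[OF ab(2,3), of "[]" "[a]"] act_cancel[OF ab(2), of "[b]" "[]"] A_offdiag ab(1) by auto
    then show False using no_shortening[of "[b]"] that ab by auto
  qed
  moreover have "u = [] \<or> u = [b] \<or> u = [a, b]"
    by (rule two_letter_word_cases[OF u no_square no_final_a no_final_bab])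
  ultimately show ?thesis by blast
qed

lemma act_dihedral_tail_nonneg:
  assumes a: "a \<in> V" and b: "b \<in> V" "a \<noteq> b" and u: "u = [] \<or> u = [b] \<or> (u = [a, b] \<and> A a b = -1)"
    and nonneg: "\<And>c y. c \<in> {a, b} \<Longrightarrow> 0 \<le> act v (unit_vec c) y"
  shows "0 \<le> act (v @ u) (unit_vec a) x"
  using u
proof (elim disjE conjE)
  assume "u = [b]"
  then have "act (v @ u) (unit_vec a) x = act v (unit_vec a) x - A a b * act v (unit_vec b) x"
    using a by (simp add: act_reflect pairing_unit_vec)
  moreover have "A a b * act v (unit_vec b) x \<le> 0"
    using A_offdiag[OF b(2)] nonneg[of b x] by (auto intro: mult_nonpos_nonneg)
  ultimately show ?thesis using nonneg[of a x] by simp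
next
  assume u: "u = [a, b]" and "A a b = -1"
  then have "reflect b (unit_vec a) = (\<lambda>z. unit_vec a z + unit_vec b z)"
    using a by (simp add: reflect_unit_vec)
  then have "act u (unit_vec a) = (\<lambda>z. reflect a (unit_vec a) z + reflect a (unit_vec b) z)"
    using u by (simp add: reflect_add)
  also have "\<dots> = unit_vec b"
    using \<open>A a b = -1\<close> a b A_sym[of a b] by (simp add: reflect_unit_vec_self reflect_unit_vec)
  finally show ?thesis using nonneg[of b x] by simp
qed (use nonneg in simp)

lemma simple_root_image_nonneg:
  assumes "set w \<subseteq> V" "a \<in> V" "weyl_length (act w) \<le> weyl_length (act (w @ [a]))"
  shows "0 \<le> act w (unit_vec a) x"
  using assms
proof (induction "weyl_length (act w)" arbitrary: w a x rule: less_induct)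
  case less
  obtain w0 where w0: "reduced w0" "act w0 = act w" using obtain_reduced less.prems(1) by blast
  have same_prefix: "act (w0 @ t) = act (w @ t)" for t using w0(2) by (simp add: act_append_fun)
  show ?case
  proof (cases w0 rule: rev_exhaust)
    case Nil
    then show ?thesis using w0(2) by (metis act_Nil unit_vec_def order.refl zero_le_one)
  next
    case (snoc w1 b)
    have len_w: "weyl_length (act w) = length w1 + 1" using w0 snoc by (simp add: reduced_def)
    have b: "b \<in> V" using w0(1) snoc by (simp add: reduced_def)
    have "b \<noteq> a"
    proof
      assume "b = a"
      then have "act (w @ [a]) = act w1"
        using same_prefix[of "[a]"] act_cancel[OF less.prems(2), of w1 "[]"] snoc by simp
      then show False using weyl_length_le[of w1] w0(1) snoc less.prems(3) len_w
        by (simp add: reduced_def)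
    qed
    obtain v u where vu: "reduced (v @ u)" "act (v @ u) = act w0" "set u \<subseteq> {a, b}"
      and "length v \<le> length w1"
      and v_ascent: "\<And>c. c \<in> {a, b} \<Longrightarrow> weyl_length (act v) \<le> weyl_length (act (v @ [c]))"
      using parabolic_factorisation[of w1 b a] w0(1) snoc less.prems(2) by blast
    have v: "reduced v" using reduced_append_left[OF vu(1)] .
    have IH: "0 \<le> act v (unit_vec c) y" if c: "c \<in> {a, b}" for c y
    proof (rule less.hyps)
      show "weyl_length (act v) < weyl_length (act w)"
        using v \<open>length v \<le> length w1\<close> len_w by (simp add: reduced_def)
      show "set v \<subseteq> V" "c \<in> V" using v c b less.prems(2) by (auto simp: reduced_def)
    qed (rule v_ascent[OF c])
    have act_w: "act (v @ u) = act w" using vu(2) w0(2) by simp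
    have "weyl_length (act (v @ u)) \<le> weyl_length (act (v @ u @ [a]))"
      using vu(2) w0(2) less.prems(3) by (metis act_append_fun append_assoc)
    then have "u = [] \<or> u = [b] \<or> (u = [a, b] \<and> A a b = -1)"
      by (rule ascent_dihedral_tail[OF vu(1) _ vu(3) \<open>b \<noteq> a\<close>[symmetric] less.prems(2) b])
    from act_dihedral_tail_nonneg[OF less.prems(2) b \<open>b \<noteq> a\<close>[symmetric] this IH]
    show ?thesis using act_w by simp
  qed
qed

lemma simple_root_image_sign_coherent:
  assumes w: "set w \<subseteq> V" and a: "a \<in> V"
  shows "sign_coherent (act w (unit_vec a))"
proof (cases "weyl_length (act w) \<le> weyl_length (act (w @ [a]))")
  case True
  then show ?thesis using simple_root_image_nonneg[OF w a] by (simp add: sign_coherent_def)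
next
  case False
  have "act (w @ [a, a]) = act w" using act_cancel[OF a, of w "[]"] by simp
  then have "0 \<le> act (w @ [a]) (unit_vec a) x" for x
    using simple_root_image_nonneg[of "w @ [a]" a x] w a False by simp
  then show ?thesis
    using a by (simp add: sign_coherent_def reflect_unit_vec_self act_uminus)
qed

lemma antidominant_le_act:
  assumes d: "\<And>c. c \<in> V \<Longrightarrow> pairing d c \<le> 0" and "reduced w"
  shows "d x \<le> act w d x"
  using \<open>reduced w\<close>
proof (induction w arbitrary: x rule: rev_induct)
  case (snoc a w)
  have w: "reduced w" using reduced_append_left[OF snoc.prems] .
  have a: "a \<in> V" using snoc.prems by (simp add: reduced_def)
  have "weyl_length (act w) \<le> weyl_length (act (w @ [a]))" using w snoc.prems by (simp add: reduced_def)
  then have "0 \<le> act w (unit_vec a) x"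
    using simple_root_image_nonneg[of w a x] w a by (simp add: reduced_def)
  moreover have "act (w @ [a]) d x = act w d x - pairing d a * act w (unit_vec a) x"
    by (simp add: act_reflect)
  ultimately show ?case
    using snoc.IH[OF w, of x] mult_nonpos_nonneg[OF d[OF a]] by (smt (verit))
qed simp

lemma act_antidominant_nonneg:
  assumes "\<And>c. c \<in> V \<Longrightarrow> pairing d c \<le> 0" and "\<And>v. 0 \<le> d v" and "set w \<subseteq> V"
  shows "0 \<le> act w d x"
proof -
  obtain w' where "reduced w'" "act w' = act w" using obtain_reduced \<open>set w \<subseteq> V\<close> by blast
  then show ?thesis using antidominant_le_act[OF assms(1), of w' x] assms(2)[of x] by simp
qed

end

lemma finite_verts: "finite (verts r k s)"
proof -
  have "verts r k s \<subseteq> L ` {1..r} \<union> (\<lambda>(i, j). C i j) ` (SIGMA i:{1..k}. {0..s i})"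
    unfolding verts_def by force
  then show ?thesis by (rule finite_subset) auto
qed

lemma arrow_asym: "arrow r k s a b \<Longrightarrow> \<not> arrow r k s b a"
  by (auto simp: arrow_def)

lemma cform_offdiag: "a \<noteq> b \<Longrightarrow> cform r k s a b = 0 \<or> cform r k s a b = -1"
  using arrow_asym[of r k s a b] by (auto simp: cform_def nedges_def)

lemma cform_sym: "cform r k s a b = cform r k s b a"
  by (auto simp: cform_def nedges_def)

interpretation supernova: simply_laced "verts r k s" "cform r k s" for r k s
  by unfold_locales
    (simp_all add: finite_verts cform_offdiag cform_sym[of r k s] cform_def[of r k s a a for a])

lemma evec_eq_unit_vec: "evec = unit_vec"
  by (simp add: fun_eq_iff evec_def unit_vec_def)

lemma bform_evec_right: "a \<in> verts r k s \<Longrightarrow> bform r k s x (evec a) = supernova.pairing r k s x a"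
  by (simp add: bform_def supernova.pairing_def evec_eq_unit_vec mult.assoc
      mult.commute[of "unit_vec a _"] sum_distrib_left[symmetric] sum_mult_unit_vec finite_verts)

lemma bform_evec_left:
  assumes "a \<in> verts r k s"
  shows "bform r k s (evec a) y = supernova.pairing r k s y a"
proof -
  have "bform r k s (evec a) y =
      (\<Sum>c\<in>verts r k s. (\<Sum>b\<in>verts r k s. y b * cform r k s c b) * unit_vec a c)"
    unfolding bform_def evec_eq_unit_vec sum_distrib_right by (simp add: mult_ac)
  then show ?thesis
    using assms by (simp add: sum_mult_unit_vec finite_verts supernova.pairing_def cform_sym[of r k s a])
qed

lemma srefl_eq_reflect: "a \<in> verts r k s \<Longrightarrow> srefl r k s a = supernova.reflect r k s a"
  by (simp add: fun_eq_iff srefl_def supernova.reflect_def bform_evec_right) (simp add: evec_eq_unit_vec)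

lemma weyl_orbit_act:
  assumes "y \<in> weyl_orbit r k s x"
  obtains w where "set w \<subseteq> verts r k s" "y = supernova.act r k s w x"
  using assms
proof (induction arbitrary: thesis rule: weyl_orbit.induct)
  case base
  then show ?case by (metis empty_subsetI empty_set supernova.act_Nil)
next
  case (step y a)
  then show ?case by (metis insert_subset list.set(2) srefl_eq_reflect supernova.act_Cons)
qed

lemma act_mem_weyl_orbit:
  "y \<in> weyl_orbit r k s x \<Longrightarrow> set w \<subseteq> verts r k s \<Longrightarrow> supernova.act r k s w y \<in> weyl_orbit r k s x"
  by (induction w) (auto simp: srefl_eq_reflect[symmetric] intro: weyl_orbit.step)

lemma act_mem_roots:
  assumes y: "y \<in> roots r k s" and w: "set w \<subseteq> verts r k s"
  shows "supernova.act r k s w y \<in> roots r k s"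
proof (cases "y \<in> real_roots r k s")
  case True
  then show ?thesis using act_mem_weyl_orbit[OF _ w] by (auto simp: roots_def real_roots_def)
next
  case False
  then obtain d where "fundamental_imag r k s d"
    "y \<in> weyl_orbit r k s d \<or> (\<lambda>b. - y b) \<in> weyl_orbit r k s d"
    using y by (auto simp: roots_def imag_roots_def)
  then have "supernova.act r k s w y \<in> weyl_orbit r k s d \<or>
      (\<lambda>b. - supernova.act r k s w y b) \<in> weyl_orbit r k s d"
    using act_mem_weyl_orbit[OF _ w] supernova.act_uminus[of r k s w y] by metis
  then show ?thesis
    using \<open>fundamental_imag r k s d\<close> by (auto simp: roots_def imag_roots_def)
qed

lemma roots_sign_coherent:
  assumes y: "y \<in> roots r k s"
  shows "sign_coherent y"
proof (cases "y \<in> real_roots r k s")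
  case True
  then obtain a w where
    "a \<in> verts r k s" "set w \<subseteq> verts r k s" "y = supernova.act r k s w (unit_vec a)"
    by (auto simp: real_roots_def evec_eq_unit_vec elim: weyl_orbit_act)
  then show ?thesis using supernova.simple_root_image_sign_coherent by blast
next
  case False
  then obtain d where d: "fundamental_imag r k s d"
    and orbit: "y \<in> weyl_orbit r k s d \<or> (\<lambda>b. - y b) \<in> weyl_orbit r k s d"
    using y by (auto simp: roots_def imag_roots_def)
  have nonneg: "0 \<le> supernova.act r k s w d x" if "set w \<subseteq> verts r k s" for w x
    using d that supernova.act_antidominant_nonneg[of r k s d w x]
    by (auto simp: fundamental_imag_def bform_evec_left)
  from orbit show ?thesis
  proof
    assume "y \<in> weyl_orbit r k s d"
    then show ?thesis using nonneg by (auto simp: sign_coherent_def elim: weyl_orbit_act)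
  next
    assume "(\<lambda>b. - y b) \<in> weyl_orbit r k s d"
    then have "0 \<le> - y x" for x using nonneg by (elim weyl_orbit_act) (metis)
    then show ?thesis by (simp add: sign_coherent_def)
  qed
qed

lemma cform_arm:
  assumes "1 \<le> i" "i \<le> k" "1 \<le> j" "j \<le> s i"
  shows "cform r k s c (C i j) =
    2 * unit_vec (C i j) c - unit_vec (C i (j - 1)) c - (if j + 1 \<le> s i then unit_vec (C i (j + 1)) c else 0)"
  using assms unfolding cform_def nedges_def arrow_def unit_vec_def by (auto; presburger)

lemma pairing_arm:
  assumes i: "1 \<le> i" "i \<le> k" and j: "1 \<le> j" "j \<le> s i"
  shows "supernova.pairing r k s x (C i j) =
    2 * x (C i j) - x (C i (j - 1)) - (if j + 1 \<le> s i then x (C i (j + 1)) else 0)"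
proof -
  have "C i j \<in> verts r k s" "C i (j - 1) \<in> verts r k s" "j + 1 \<le> s i \<Longrightarrow> C i (j + 1) \<in> verts r k s"
    using i j by (auto simp: verts_def)
  then show ?thesis
    by (simp add: supernova.pairing_def cform_arm[where r=r and k=k and s=s, OF i j]
        right_diff_distrib sum_subtractf sum_distrib_left[symmetric] mult.left_commute[of _ 2]
        finite_verts sum_mult_unit_vec)
qed

lemma arm_ascent_reflects_negative:
  assumes i: "1 \<le> i" "i \<le> k" and j: "1 \<le> j" "j \<le> s i"
    and ascent: "x (C i (j - 1)) < x (C i j)"
  shows "\<exists>w m. set w \<subseteq> verts r k s \<and> supernova.act r k s w x (C i 0) = x (C i 0)
    \<and> supernova.act r k s w x m < 0"
  using j ascent
proof (induction "s i - j" arbitrary: j x)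
  case 0
  let ?y = "supernova.reflect r k s (C i j) x"
  have "?y (C i j) = x (C i (j - 1)) - x (C i j)" "?y (C i 0) = x (C i 0)"
    using 0 pairing_arm[where r=r and s=s and x=x and j=j, OF i]
    by (simp_all add: supernova.reflect_apply unit_vec_def)
  moreover have "C i j \<in> verts r k s" using i 0 by (auto simp: verts_def)
  ultimately show ?case using 0 by (intro exI[of _ "[C i j]"] exI[of _ "C i j"]) simp
next
  case (Suc n)
  define y where "y = supernova.reflect r k s (C i j) x"
  have next_j: "n = s i - (j + 1)" "j + 1 \<le> s i" using Suc.hyps(2) by simp_all
  then have y: "y (C i j) = x (C i (j - 1)) + x (C i (j + 1)) - x (C i j)"
    "y (C i (j + 1)) = x (C i (j + 1))" "y (C i 0) = x (C i 0)"
    using Suc.prems pairing_arm[where r=r and s=s and x=x and j=j, OF i]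
    by (simp_all add: y_def supernova.reflect_apply unit_vec_def)
  have y_ascent: "y (C i (j + 1 - 1)) < y (C i (j + 1))" using y Suc.prems by simp
  obtain w m where w: "set w \<subseteq> verts r k s" "supernova.act r k s w y (C i 0) = x (C i 0)"
    "supernova.act r k s w y m < 0"
    using Suc.hyps(1)[OF next_j(1) _ next_j(2) y_ascent] y(3) by auto
  moreover have "C i j \<in> verts r k s" using i Suc by (auto simp: verts_def)
  ultimately show ?case by (intro exI[of _ "w @ [C i j]"] exI[of _ m]) (simp add: y_def)
qed

theorem lemma2p7:
  fixes r k :: nat and s :: "nat \<Rightarrow> nat" and v :: "vtx \<Rightarrow> int" and i :: nat
  assumes "v \<in> roots r k s"
    and "\<forall>a. 0 \<le> v a"
    and "1 \<le> i" and "i \<le> k"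
    and "v (C i 0) > 0"
  shows "\<forall>j. 1 \<le> j \<and> j \<le> s i \<longrightarrow> v (C i j) \<le> v (C i (j - 1))"
proof (rule ccontr)
  assume "\<not> ?thesis"
  then obtain j where "1 \<le> j" "j \<le> s i" "v (C i (j - 1)) < v (C i j)" by force
  then obtain w m where w: "set w \<subseteq> verts r k s" "supernova.act r k s w v (C i 0) = v (C i 0)"
    "supernova.act r k s w v m < 0"
    using arm_ascent_reflects_negative[OF assms(3,4)] by blast
  have "sign_coherent (supernova.act r k s w v)"
    using roots_sign_coherent act_mem_roots assms(1) w(1) by blast
  then show False using w(2,3) assms(5) unfolding sign_coherent_def by (metis leD)
qed

end
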